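(* Let $b(\lambda)=\frac14\lambda^4+\frac12p\lambda^2+q\lambda$ with $p<0$, $q\in\mathbb{R}$, and $B_\eta(\lambda)=\eta\lambda-b(\lambda)$. Define $\lambda:\mathbb{R}\to\mathbb{R}$ by: for $\eta\neq q$, $\lambda(\eta)$ is the unique point at which $B_\eta$ attains its global maximum (this point lies below $-\sqrt{-p}$ when $\eta<q$ and above $\sqrt{-p}$ when $\eta>q$), and $\lambda(q)=\sqrt{-p}$. Then $\eta\mapsto\lambda(\eta)$ maps $\mathbb{R}$ onto $\mathbb{R}\setminus[-\sqrt{-p},\sqrt{-p})$, and it is (a) differentiable on $\mathbb{R}\setminus\{q\}$, (b) continuous from the right at $\eta=q$, and (c) increasing and injective on $\mathbb{R}$. *)

theory Defs
  imports Complex_Main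
begin

definition bfun :: "real \<Rightarrow> real \<Rightarrow> real \<Rightarrow> real" where
  "bfun p q l = l ^ 4 / 4 + p * l ^ 2 / 2 + q * l"

definition Bfun :: "real \<Rightarrow> real \<Rightarrow> real \<Rightarrow> real \<Rightarrow> real" where
  "Bfun p q \<eta> l = \<eta> * l - bfun p q l"

definition lam :: "real \<Rightarrow> real \<Rightarrow> real \<Rightarrow> real" where
  "lam p q \<eta> = (if \<eta> = q then sqrt (- p)
                 else (THE l. \<forall>\<mu>. Bfun p q \<eta> \<mu> \<le> Bfun p q \<eta> l))"

end

theory Submission
  imports Defs "HOL-Analysis.Analysis"
begin

text \<open>
  The critical points of \<open>B\<^sub>\<eta>\<close> are the roots of \<open>\<lambda>\<^sup>3 + p\<lambda> = \<eta> - q\<close>, and the identity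
  \<open>4 (B\<^sub>\<eta>(l) - B\<^sub>\<eta>(\<mu>)) = (l - \<mu>)\<^sup>2 ((\<mu> + l)\<^sup>2 + 2l\<^sup>2 + 2p)\<close> for such a root \<open>l\<close> shows that
  \<open>l\<close> is the unique global maximiser as soon as \<open>l\<^sup>2 > -p\<close>. The cubic \<open>P(\<lambda>) = \<lambda>\<^sup>3 + p\<lambda>\<close>
  is a strictly increasing bijection from \<open>\<real> \<setminus> [-\<surd>-p, \<surd>-p)\<close> onto \<open>\<real>\<close>, and \<open>\<lambda>(\<eta>)\<close> is
  its inverse evaluated at \<open>\<eta> - q\<close>. Monotonicity, injectivity, the range and the
  right-continuity at \<open>q\<close> are inherited from \<open>P\<close>; away from \<open>q\<close> we have \<open>P'(\<lambda>) = 3\<lambda>\<^sup>2 + p > 0\<close>,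
  so the inverse function theorem gives differentiability.
\<close>

lemma Bfun_diff_eq:
  fixes p q \<eta> l \<mu> :: real
  assumes "\<eta> - q = l^3 + p*l"
  shows "4 * (Bfun p q \<eta> l - Bfun p q \<eta> \<mu>) = (l - \<mu>)^2 * ((\<mu> + l)^2 + 2*l^2 + 2*p)"
proof -
  have \<eta>: "\<eta> = l^3 + p*l + q" using assms by simp
  show ?thesis unfolding Bfun_def bfun_def \<eta> by (simp add: algebra_simps) algebra
qed

lemma Bfun_argmax_iff:
  fixes p q \<eta> l m :: real
  assumes root: "\<eta> - q = l^3 + p*l" and "-p < l^2"
  shows "(\<forall>\<mu>. Bfun p q \<eta> \<mu> \<le> Bfun p q \<eta> m) \<longleftrightarrow> m = l"
proof -
  have pos: "0 < (\<mu> + l)^2 + 2*l^2 + 2*p" for \<mu>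
    using assms(2) zero_le_power2[of "\<mu> + l"] by linarith
  have "Bfun p q \<eta> \<mu> \<le> Bfun p q \<eta> l" for \<mu>
  proof -
    have "0 \<le> (l - \<mu>)^2 * ((\<mu> + l)^2 + 2*l^2 + 2*p)" using pos[of \<mu>] by simp
    then show ?thesis unfolding Bfun_diff_eq[OF root, of \<mu>, symmetric] by simp
  qed
  moreover have "m = l" if "Bfun p q \<eta> l \<le> Bfun p q \<eta> m"
  proof -
    have "(l - m)^2 * ((m + l)^2 + 2*l^2 + 2*p) \<le> 0"
      unfolding Bfun_diff_eq[OF root, of m, symmetric] using that by simp
    then have "(l - m)^2 \<le> 0" using pos[of m] by (simp add: mult_le_0_iff)
    then show ?thesis by simp
  qed
  ultimately show ?thesis by blast
qed

lemma lam_eq_root: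
  fixes p q \<eta> l :: real
  assumes "\<eta> \<noteq> q" "\<eta> - q = l^3 + p*l" "-p < l^2"
  shows "lam p q \<eta> = l"
  unfolding lam_def using assms Bfun_argmax_iff[OF assms(2,3)] by (simp add: the_equality)

lemma cubic_sqrt_root:
  fixes p :: real
  assumes "p \<le> 0"
  shows "sqrt (-p)^3 + p * sqrt (-p) = 0"
  using assms by (simp add: power3_eq_cube)

lemma cubic_strict_mono_on:
  fixes p :: real
  assumes "p < 0"
  shows "strict_mono_on (UNIV - {-sqrt (-p)..<sqrt (-p)}) (\<lambda>l. l^3 + p*l)"
proof (rule strict_mono_onI)
  fix a b :: real
  assume "a \<in> UNIV - {-sqrt (-p)..<sqrt (-p)}" "b \<in> UNIV - {-sqrt (-p)..<sqrt (-p)}" "a < b"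
  moreover define s where "s = sqrt (-p)"
  ultimately have a: "a < -s \<or> s \<le> a" and b: "b < -s \<or> s \<le> b" and "a < b" by auto
  have s: "0 < s" "p = - (s^2)" using assms by (auto simp: s_def)
  have factor: "x^3 + p*x = x * (x - s) * (x + s)" for x
    using s(2) by (simp add: algebra_simps power2_eq_square power3_eq_cube)
  have upper: "x * (x - s) * (x + s) < y * (y - s) * (y + s)" if "s \<le> x" "x < y" for x y
    using that s(1) by (simp add: mult_strict_mono)
  consider "a < -s" "b < -s" | "s \<le> a" | "a < -s" "s \<le> b"
    using a b \<open>a < b\<close> s(1) by linarith
  then show "a^3 + p*a < b^3 + p*b"
  proof cases
    case 1
    \<comment> \<open>the cubic is odd, so this reduces to the branch \<open>[s, \<infinity>)\<close>\<close>
    then have "(-b) * (-b - s) * (-b + s) < (-a) * (-a - s) * (-a + s)"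
      using \<open>a < b\<close> by (intro upper) auto
    then show ?thesis unfolding factor by (simp add: algebra_simps)
  next
    case 2
    then show ?thesis unfolding factor using \<open>a < b\<close> by (rule upper)
  next
    case 3
    have "a * (a - s) * (a + s) < 0" using 3 s(1) by (intro mult_pos_neg mult_neg_neg) auto
    moreover have "0 \<le> b * (b - s) * (b + s)" using 3 s(1) by simp
    ultimately show ?thesis unfolding factor by linarith
  qed
qed

lemma cubic_pos_root:
  fixes p c :: real
  assumes "p < 0" "0 < c"
  shows "\<exists>l. sqrt (-p) < l \<and> l^3 + p*l = c"
proof -
  define s where "s = sqrt (-p)"
  have s: "0 < s" "p = - (s^2)" using assms by (auto simp: s_def)
  define x where "x = s + c + 1"
  have "x^3 + p*x = x * (x - s) * (x + s)"
    unfolding s(2) by (simp add: algebra_simps power2_eq_square power3_eq_cube)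
  also have "\<dots> \<ge> 1 * (c + 1) * 1"
    using s assms unfolding x_def by (intro mult_mono) auto
  finally have "c \<le> x^3 + p*x" by simp
  moreover have "s^3 + p * s = 0" using cubic_sqrt_root assms by (simp add: s_def)
  moreover have "continuous_on {s..x} (\<lambda>l. l^3 + p*l)" by (intro continuous_intros)
  ultimately obtain l where "s \<le> l" "l^3 + p*l = c"
    using IVT'[of "\<lambda>l. l^3 + p*l" s c x] assms s(1) by (auto simp: x_def)
  moreover have "l \<noteq> s" using \<open>s^3 + p * s = 0\<close> assms calculation by auto
  ultimately show ?thesis unfolding s_def by (intro exI[of _ l]) auto
qed

lemma cubic_surj_on:
  fixes p c :: real
  assumes "p < 0"
  obtains l where "l \<in> UNIV - {-sqrt (-p)..<sqrt (-p)}" "l^3 + p*l = c"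
proof (cases c "0::real" rule: linorder_cases)
  case less
  then obtain l where "sqrt (-p) < l" "l^3 + p*l = -c"
    using cubic_pos_root[OF assms, of "-c"] by auto
  then show ?thesis using that[of "-l"] by (auto simp: power3_eq_cube)
next
  case equal
  then show ?thesis using that[of "sqrt (-p)"] cubic_sqrt_root assms by simp
next
  case greater
  then obtain l where "sqrt (-p) < l" "l^3 + p*l = c"
    using cubic_pos_root[OF assms] by blast
  then show ?thesis using that[of l] by simp
qed

lemma cubic_root_outside_sq_gt:
  fixes p l :: real
  assumes "p < 0" "l \<in> UNIV - {-sqrt (-p)..<sqrt (-p)}" "l^3 + p*l \<noteq> 0"
  shows "-p < l^2"
proof -
  have "l \<noteq> sqrt (-p)" using assms cubic_sqrt_root[of p] by auto
  then have "sqrt (-p) < \<bar>l\<bar>" using assms(2) by auto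
  then have "sqrt (-p)^2 < \<bar>l\<bar>^2" using assms(1) by (intro power_strict_mono) auto
  then show ?thesis using assms(1) by simp
qed

lemma lam_cubic:
  fixes p q \<eta> :: real
  assumes "p < 0"
  shows "lam p q \<eta> \<in> UNIV - {-sqrt (-p)..<sqrt (-p)}"
    and "lam p q \<eta>^3 + p * lam p q \<eta> = \<eta> - q"
proof -
  have "lam p q \<eta> \<in> UNIV - {-sqrt (-p)..<sqrt (-p)} \<and> lam p q \<eta>^3 + p * lam p q \<eta> = \<eta> - q"
  proof (cases "\<eta> = q")
    case True
    then show ?thesis using assms cubic_sqrt_root by (simp add: lam_def)
  next
    case False
    obtain l where l: "l \<in> UNIV - {-sqrt (-p)..<sqrt (-p)}" "l^3 + p*l = \<eta> - q"
      using cubic_surj_on[OF assms] .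
    then have "-p < l^2" using cubic_root_outside_sq_gt[OF assms] False by simp
    then have "lam p q \<eta> = l" using lam_eq_root[OF False l(2)[symmetric]] by blast
    then show ?thesis using l by simp
  qed
  then show "lam p q \<eta> \<in> UNIV - {-sqrt (-p)..<sqrt (-p)}" "lam p q \<eta>^3 + p * lam p q \<eta> = \<eta> - q"
    by auto
qed

lemma lam_sq_gt:
  fixes p q \<eta> :: real
  assumes "p < 0" "\<eta> \<noteq> q"
  shows "-p < lam p q \<eta>^2"
  using cubic_root_outside_sq_gt[OF assms(1) lam_cubic(1)[OF assms(1)]] lam_cubic(2)[OF assms(1)] assms(2)
  by simp

lemma lam_cubic_inverse:
  fixes p q a :: real
  assumes "p < 0" "a \<in> UNIV - {-sqrt (-p)..<sqrt (-p)}"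
  shows "lam p q (a^3 + p*a + q) = a"
proof -
  let ?l = "lam p q (a^3 + p*a + q)"
  have "?l^3 + p * ?l = a^3 + p*a" using lam_cubic(2)[OF assms(1)] by simp
  then show ?thesis
    using inj_onD[OF strict_mono_on_imp_inj_on[OF cubic_strict_mono_on[OF assms(1)]] _
        lam_cubic(1)[OF assms(1)] assms(2)]
    by simp
qed

lemma lam_less_iff_cubic_less:
  fixes p q \<eta> :: real
  assumes "p < 0" "a \<in> UNIV - {-sqrt (-p)..<sqrt (-p)}"
  shows "lam p q \<eta> < a \<longleftrightarrow> \<eta> - q < a^3 + p*a"
    and "a < lam p q \<eta> \<longleftrightarrow> a^3 + p*a < \<eta> - q"
  using strict_mono_on_less[OF cubic_strict_mono_on[OF assms(1)] lam_cubic(1)[OF assms(1), of q \<eta>] assms(2)]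
    strict_mono_on_less[OF cubic_strict_mono_on[OF assms(1)] assms(2) lam_cubic(1)[OF assms(1), of q \<eta>]]
    lam_cubic(2)[OF assms(1), of q \<eta>]
  by auto

lemma strict_mono_lam:
  fixes p q :: real
  assumes "p < 0"
  shows "strict_mono (lam p q)"
  using lam_less_iff_cubic_less(1)[OF assms lam_cubic(1)[OF assms]] lam_cubic(2)[OF assms]
  by (auto intro!: strict_monoI)

lemma range_lam:
  fixes p q :: real
  assumes "p < 0"
  shows "range (lam p q) = UNIV - {-sqrt (-p)..<sqrt (-p)}"
  using lam_cubic(1)[OF assms] lam_cubic_inverse[OF assms] by (metis image_subsetI rangeI subsetI subset_antisym)

lemma lam_has_real_derivative:
  fixes p q \<eta> :: real
  assumes "p < 0" "\<eta> \<noteq> q"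
  shows "(lam p q has_real_derivative inverse (3 * lam p q \<eta>^2 + p)) (at \<eta>)"
proof -
  define x where "x = lam p q \<eta>"
  have "-p < x^2" using lam_sq_gt[OF assms] by (simp add: x_def)
  then have "sqrt (-p) < \<bar>x\<bar>" using real_sqrt_less_mono by fastforce
  define d where "d = (\<bar>x\<bar> - sqrt (-p)) / 2"
  have "0 < d" using \<open>sqrt (-p) < \<bar>x\<bar>\<close> by (simp add: d_def)
  have near: "z \<in> UNIV - {-sqrt (-p)..<sqrt (-p)}" if "\<bar>z - x\<bar> \<le> d" for z
    using that \<open>sqrt (-p) < \<bar>x\<bar>\<close> unfolding d_def by (auto simp: abs_if split: if_splits)
  have "isCont (lam p q) (x^3 + p*x + q)"
    by (rule isCont_inverse_function[OF \<open>0 < d\<close>])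
       (auto intro!: continuous_intros lam_cubic_inverse[OF assms(1)] near)
  moreover have "\<eta> = x^3 + p*x + q" using lam_cubic(2)[OF assms(1)] by (simp add: x_def)
  ultimately have "isCont (lam p q) \<eta>" by simp
  have "0 < 3 * x^2 + p" using \<open>-p < x^2\<close> zero_le_power2[of x] by linarith
  then have "3 * x^2 + p \<noteq> 0" by simp
  moreover have "((\<lambda>z. z^3 + p*z + q) has_real_derivative 3 * x^2 + p) (at (lam p q \<eta>))"
    unfolding x_def by (auto intro!: derivative_eq_intros)
  ultimately show ?thesis
    unfolding x_def
    by (intro DERIV_inverse_function[where a="\<eta> - 1" and b="\<eta> + 1"])
       (use \<open>isCont (lam p q) \<eta>\<close> lam_cubic(2)[OF assms(1)] in auto)
qed

lemma continuous_at_right_lam: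
  fixes p q :: real
  assumes "p < 0"
  shows "continuous (at_right q) (lam p q)"
proof -
  have "\<exists>\<delta>>0. lam p q (q + \<delta>) - lam p q q < \<epsilon>" if "0 < \<epsilon>" for \<epsilon> :: real
  proof -
    \<comment> \<open>every value above \<open>\<lambda>(q) = \<surd>-p\<close> is attained, so there is no jump\<close>
    define a where "a = sqrt (-p) + \<epsilon> / 2"
    have a: "a \<in> UNIV - {-sqrt (-p)..<sqrt (-p)}" "sqrt (-p) < a"
      using that by (auto simp: a_def)
    have "0 < a^3 + p*a"
      using strict_mono_onD[OF cubic_strict_mono_on[OF assms] _ a(1) a(2)] cubic_sqrt_root assms
      by simp
    moreover have "lam p q (q + (a^3 + p*a)) = a"
      using lam_cubic_inverse[OF assms a(1)] by (simp add: add.commute)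
    ultimately show ?thesis using that by (intro exI[of _ "a^3 + p*a"]) (simp add: lam_def a_def)
  qed
  then show ?thesis
    using continuous_at_right_real_increasing strict_mono_lam[OF assms]
    by (metis strict_mono_less_eq)
qed

theorem proposition3p4:
  fixes p q :: real
  assumes "p < 0"
  shows "(\<forall>\<eta>. \<eta> \<noteq> q \<longrightarrow> (\<exists>!l. \<forall>\<mu>. Bfun p q \<eta> \<mu> \<le> Bfun p q \<eta> l))
       \<and> (\<forall>\<eta>. \<eta> < q \<longrightarrow> lam p q \<eta> < - sqrt (- p))
       \<and> (\<forall>\<eta>. \<eta> > q \<longrightarrow> lam p q \<eta> > sqrt (- p))
       \<and> range (lam p q) = UNIV - {- sqrt (- p)..<sqrt (- p)}
       \<and> (\<forall>\<eta>. \<eta> \<noteq> q \<longrightarrow> lam p q differentiable (at \<eta>))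
       \<and> continuous (at_right q) (lam p q)
       \<and> mono (lam p q) \<and> inj (lam p q)"
proof -
  have argmax: "\<exists>!l. \<forall>\<mu>. Bfun p q \<eta> \<mu> \<le> Bfun p q \<eta> l" if "\<eta> \<noteq> q" for \<eta>
    using Bfun_argmax_iff[OF lam_cubic(2)[OF assms, symmetric] lam_sq_gt[OF assms that]]
    by (intro ex1I[of _ "lam p q \<eta>"]) auto
  have "lam p q \<eta> < - sqrt (- p)" if "\<eta> < q" for \<eta>
    using that lam_less_iff_cubic_less(1)[OF assms, of "sqrt (-p)"] lam_cubic(1)[OF assms, of q \<eta>]
    by (simp add: cubic_sqrt_root assms less_imp_le)
  moreover have "lam p q \<eta> > sqrt (- p)" if "\<eta> > q" for \<eta>
    using that lam_less_iff_cubic_less(2)[OF assms, of "sqrt (-p)"] by (simp add: cubic_sqrt_root assms less_imp_le)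
  moreover have "lam p q differentiable (at \<eta>)" if "\<eta> \<noteq> q" for \<eta>
    using lam_has_real_derivative[OF assms that] real_differentiable_def by blast
  ultimately show ?thesis
    using argmax range_lam[OF assms] continuous_at_right_lam[OF assms] strict_mono_lam[OF assms]
    by (simp add: strict_mono_mono strict_mono_imp_inj_on)
qed

end
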